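(* Let $w:\mathcal X\to(0,\infty)$ be a weight function and let $\mathbf{x}=(x_1,\dots,x_n)$ be a random point of $\mathcal X^n$ whose marginals are all equal to $\tilde\nu=\tilde w\mu$, with $\tilde w$ a probability density w.r.t. $\mu$ such that $\tilde w\le\beta w$ for a constant $\beta>0$. Let $0<\delta<1$ and $S_\delta=\{\lambda_{\min}(\mathbf G^w)\ge1-\delta\}$, and assume $\mathbb P(S_\delta)>0$. Then for every $f\in L^2_\mu(\mathcal X)$, $$\mathbb E\big(\|\hat P_{V_m}f\|^2\mid S_\delta\big)\le \mathbb P(S_\delta)^{-1}(1-\delta)^{-1}\beta\,\|f\|^2,$$ and $$\mathbb E\big(\|f-\hat P_{V_m}f\|^2\mid S_\delta\big)\le\big(1+\mathbb P(S_\delta)^{-1}(1-\delta)^{-1}\beta\big)\inf_{g\in V_m}\|f-g\|^2.$$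
   Context: $\mathcal X$ is a Polish space with Borel probability measure $\mu$; $\|\cdot\|$ is the $L^2_\mu(\mathcal X)$ norm. $V_m\subset L^2_\mu$ is an $m$-dimensional subspace with $L^2_\mu$-orthonormal basis $\varphi_1,\dots,\varphi_m$ (fixed pointwise representatives), $\boldsymbol\varphi(x)=(\varphi_1(x),\dots,\varphi_m(x))^T$, and $P_{V_m}$ is the $L^2_\mu$-orthogonal projection onto $V_m$. Given points $x_1,\dots,x_n$ and weight $w>0$: empirical semi-norm $\|f\|_n^2=\frac1n\sum_i w(x_i)^{-1}f(x_i)^2$; empirical Gram matrix $\mathbf G^w=\frac1n\sum_i w(x_i)^{-1}\boldsymbol\varphi(x_i)\boldsymbol\varphi(x_i)^T$; when $\mathbf G^w$ is invertible, the weighted least-squares projection $\hat P_{V_m}f$ is the unique minimizer over $g\in V_m$ of $\|f-g\|_n$. $\lambda_{\min}$ denotes the smallest eigenvalue. *)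

theory Defs
  imports "HOL-Probability.Probability"
begin

definition l2norm :: "'a measure \<Rightarrow> ('a \<Rightarrow> real) \<Rightarrow> real" where
  "l2norm \<mu> f = sqrt (\<integral>x. (f x)\<^sup>2 \<partial>\<mu>)"

definition vm_elem :: "('m::finite \<Rightarrow> 'a \<Rightarrow> real) \<Rightarrow> real^'m \<Rightarrow> 'a \<Rightarrow> real" where
  "vm_elem \<phi> c = (\<lambda>x. \<Sum>i\<in>UNIV. c $ i * \<phi> i x)"

definition emp_norm :: "('a \<Rightarrow> real) \<Rightarrow> nat \<Rightarrow> (nat \<Rightarrow> 'a) \<Rightarrow> ('a \<Rightarrow> real) \<Rightarrow> real" where
  "emp_norm w n xs f = sqrt ((1 / real n) * (\<Sum>i<n. (f (xs i))\<^sup>2 / w (xs i)))"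

definition emp_gram :: "('a \<Rightarrow> real) \<Rightarrow> ('m::finite \<Rightarrow> 'a \<Rightarrow> real) \<Rightarrow> nat \<Rightarrow> (nat \<Rightarrow> 'a) \<Rightarrow> real^'m^'m" where
  "emp_gram w \<phi> n xs = (\<chi> j k. (1 / real n) * (\<Sum>i<n. \<phi> j (xs i) * \<phi> k (xs i) / w (xs i)))"

definition lambda_min :: "real^'m^'m \<Rightarrow> real" where
  "lambda_min A = Min {l. \<exists>v. v \<noteq> 0 \<and> A *v v = l *\<^sub>R v}"

text \<open>Weighted least-squares projection: the unique minimizer over V_m of the empirical
  semi-norm distance to f (meaningful when the empirical Gram matrix is invertible).\<close>
definition wls_proj :: "('a \<Rightarrow> real) \<Rightarrow> ('m::finite \<Rightarrow> 'a \<Rightarrow> real) \<Rightarrow> nat \<Rightarrow> (nat \<Rightarrow> 'a)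
    \<Rightarrow> ('a \<Rightarrow> real) \<Rightarrow> 'a \<Rightarrow> real" where
  "wls_proj w \<phi> n xs f = (THE g. (\<exists>c. g = vm_elem \<phi> c) \<and>
      (\<forall>d. emp_norm w n xs (\<lambda>x. f x - g x) \<le> emp_norm w n xs (\<lambda>x. f x - vm_elem \<phi> d x)))"

end

theory Submission
  imports Defs
begin

text \<open>On the event \<open>S\<^sub>\<delta>\<close> the empirical Gram matrix \<open>G\<close> has Rayleigh quotient at least
  \<open>1 - \<delta>\<close>. The weighted least-squares coefficient vector \<open>c\<close> of \<open>h\<close> solves the normal
  equations \<open>G c = (\<langle>\<phi>\<^sub>j, h\<rangle>\<^sub>n)\<^sub>j\<close>, so by empirical Pythagoras, for every \<open>d\<close>,
  \<open>(1 - \<delta>) |c - d|\<^sup>2 \<le> (c - d) \<bullet> G (c - d) \<le> \<parallel>h - \<Sum>\<^sub>j d\<^sub>j \<phi>\<^sub>j\<parallel>\<^sub>n\<^sup>2\<close>.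
  Since each sample has density \<open>wt \<le> \<beta> w\<close>, \<open>E \<parallel>g\<parallel>\<^sub>n\<^sup>2 \<le> \<beta> \<parallel>g\<parallel>\<^sup>2\<close>. With \<open>d = 0\<close> and
  \<open>\<parallel>P\<^sub>n f\<parallel> = |c|\<close> (orthonormality) this gives the first bound after restricting to \<open>S\<^sub>\<delta>\<close> and
  dividing by its probability. For the second take \<open>d\<close> the coefficients of \<open>P f\<close>: then
  \<open>\<parallel>f - P\<^sub>n f\<parallel>\<^sup>2 = \<parallel>f - P f\<parallel>\<^sup>2 + |c - d|\<^sup>2\<close> and \<open>|c - d|\<^sup>2 \<le> \<parallel>f - P f\<parallel>\<^sub>n\<^sup>2 / (1 - \<delta>)\<close>.\<close>

section \<open>Symmetric matrices\<close>

lemma inner_matrix_vector_mult_symmetric: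
  fixes A :: "real^'m^'m"
  assumes "transpose A = A"
  shows "u \<bullet> (A *v v) = v \<bullet> (A *v u)"
proof -
  have "u \<bullet> (A *v v) = (transpose A *v u) \<bullet> v"
    by (simp add: dot_lmul_matrix)
  then show ?thesis
    using assms by (simp add: inner_commute)
qed

lemma linear_coefficient_zero_if_quadratic_nonneg:
  fixes a b :: real
  assumes "\<And>t. 0 \<le> 2 * t * a + t\<^sup>2 * b"
  shows "a = 0"
proof -
  define B where "B = \<bar>b\<bar> + 1"
  have "0 < B" "b / B < 2"
    by (simp_all add: B_def add_nonneg_pos divide_less_eq)
  have "0 \<le> 2 * (- a / B) * a + (- a / B)\<^sup>2 * b"
    by (rule assms)
  also have "\<dots> = (a\<^sup>2 / B) * (b / B - 2)"
    using \<open>0 < B\<close> by (simp add: power2_eq_square field_simps)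
  finally have "a\<^sup>2 / B \<le> 0"
    using zero_le_mult_iff[of "a\<^sup>2 / B" "b / B - 2"] \<open>b / B < 2\<close> by linarith
  then show ?thesis
    using \<open>0 < B\<close> by (simp add: divide_le_0_iff)
qed

lemma rayleigh_minimizer_is_eigenvector:
  fixes A :: "real^'m^'m"
  assumes sym: "transpose A = A"
    and lower: "\<And>u. m * (u \<bullet> u) \<le> u \<bullet> (A *v u)"
    and attained: "v \<bullet> (A *v v) = m * (v \<bullet> v)"
  shows "A *v v = m *\<^sub>R v"
proof -
  define r where "r = A *v v - m *\<^sub>R v"
  have "u \<bullet> r = 0" for u
  proof (rule linear_coefficient_zero_if_quadratic_nonneg)
    fix t
    have "m * ((v + t *\<^sub>R u) \<bullet> (v + t *\<^sub>R u)) \<le> (v + t *\<^sub>R u) \<bullet> (A *v (v + t *\<^sub>R u))"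
      by (rule lower)
    then show "0 \<le> 2 * t * (u \<bullet> r) + t\<^sup>2 * (u \<bullet> (A *v u) - m * (u \<bullet> u))"
      using inner_matrix_vector_mult_symmetric[OF sym, of v u] attained
      by (simp add: r_def inner_commute[of v u] power2_eq_square algebra_simps)
  qed
  from this[of r] show ?thesis
    by (simp add: r_def)
qed

lemma symmetric_matrix_min_eigenvalue:
  fixes A :: "real^'m^'m"
  assumes sym: "transpose A = A"
  obtains v m where "v \<noteq> 0" "A *v v = m *\<^sub>R v" "\<And>u. m * (u \<bullet> u) \<le> u \<bullet> (A *v u)"
proof -
  let ?Q = "\<lambda>u. u \<bullet> (A *v u)"
  have "continuous_on (sphere 0 1) ?Q"
    by (intro continuous_intros matrix_vector_mult_linear_continuous_on)
  moreover have "sphere (0::real^'m) 1 \<noteq> {}"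
    using vector_choose_size[of 1] by auto
  ultimately obtain v where v: "v \<in> sphere 0 1" and vmin: "\<And>y. y \<in> sphere 0 1 \<Longrightarrow> ?Q v \<le> ?Q y"
    using continuous_attains_inf[OF compact_sphere] by blast
  have lower: "?Q v * (u \<bullet> u) \<le> ?Q u" for u
  proof (cases "u = 0")
    case False
    then have "?Q v \<le> ?Q ((1 / norm u) *\<^sub>R u)"
      by (intro vmin) simp
    also have "\<dots> = ?Q u / (norm u)\<^sup>2"
      by (simp add: matrix_vector_mult_scaleR power2_eq_square)
    finally show ?thesis
      using False by (simp add: field_simps power2_norm_eq_inner)
  qed simp
  have "v \<bullet> v = 1"
    using v by (simp add: norm_eq_1)
  then have "A *v v = ?Q v *\<^sub>R v"
    by (intro rayleigh_minimizer_is_eigenvector[OF sym lower]) simp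
  moreover have "v \<noteq> 0"
    using v by auto
  ultimately show ?thesis
    using lower that by blast
qed

lemma symmetric_matrix_finite_eigenvalues:
  fixes A :: "real^'m^'m"
  assumes sym: "transpose A = A"
  shows "finite {l. \<exists>v. v \<noteq> 0 \<and> A *v v = l *\<^sub>R v}"
proof -
  let ?E = "{l. \<exists>v. v \<noteq> 0 \<and> A *v v = l *\<^sub>R v}"
  define e where "e l = (SOME v. v \<noteq> 0 \<and> A *v v = l *\<^sub>R v)" for l
  have e: "e l \<noteq> 0 \<and> A *v e l = l *\<^sub>R e l" if "l \<in> ?E" for l
    using that someI_ex[of "\<lambda>v. v \<noteq> 0 \<and> A *v v = l *\<^sub>R v"] unfolding e_def by blast
  have orth: "e l \<bullet> e k = 0" if "l \<in> ?E" "k \<in> ?E" "l \<noteq> k" for l k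
  proof -
    have "e l \<bullet> (A *v e k) = e k \<bullet> (A *v e l)"
      by (rule inner_matrix_vector_mult_symmetric[OF sym])
    then have "k * (e l \<bullet> e k) = l * (e l \<bullet> e k)"
      using e[OF that(1)] e[OF that(2)] by (simp add: inner_commute)
    then show ?thesis
      using that(3) by simp
  qed
  have "inj_on e ?E"
  proof (rule inj_onI, rule ccontr)
    fix l k
    assume "l \<in> ?E" "k \<in> ?E" "e l = e k" "l \<noteq> k"
    then have "e l \<bullet> e l = 0"
      using orth[of l k] by simp
    then show False
      using e[OF \<open>l \<in> ?E\<close>] by simp
  qed
  have "pairwise orthogonal (e ` ?E)"
    unfolding pairwise_def orthogonal_def using orth by auto
  moreover have "0 \<notin> e ` ?E"
    using e by (metis (no_types, lifting) imageE)
  ultimately have "finite (e ` ?E)"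
    using pairwise_orthogonal_independent independent_bound by blast
  then show ?thesis
    using \<open>inj_on e ?E\<close> finite_imageD by blast
qed

lemma lambda_min_le_rayleigh:
  fixes A :: "real^'m^'m"
  assumes sym: "transpose A = A"
  shows "lambda_min A * (u \<bullet> u) \<le> u \<bullet> (A *v u)"
proof -
  obtain v m where "v \<noteq> 0" "A *v v = m *\<^sub>R v" and m: "\<And>u. m * (u \<bullet> u) \<le> u \<bullet> (A *v u)"
    using symmetric_matrix_min_eigenvalue[OF sym] by blast
  then have "lambda_min A \<le> m"
    unfolding lambda_min_def using symmetric_matrix_finite_eigenvalues[OF sym] by (intro Min_le) auto
  then have "lambda_min A * (u \<bullet> u) \<le> m * (u \<bullet> u)"
    by (simp add: mult_right_mono)
  then show ?thesis
    using m order_trans by blast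
qed

section \<open>Empirical inner product and normal equations\<close>

definition emp_inner :: "('a \<Rightarrow> real) \<Rightarrow> nat \<Rightarrow> (nat \<Rightarrow> 'a) \<Rightarrow> ('a \<Rightarrow> real) \<Rightarrow> ('a \<Rightarrow> real) \<Rightarrow> real"
  where "emp_inner w n p u v = (1 / real n) * (\<Sum>i<n. u (p i) * v (p i) / w (p i))"

definition emp_rhs :: "('a \<Rightarrow> real) \<Rightarrow> ('m::finite \<Rightarrow> 'a \<Rightarrow> real) \<Rightarrow> nat \<Rightarrow> (nat \<Rightarrow> 'a)
    \<Rightarrow> ('a \<Rightarrow> real) \<Rightarrow> real^'m"
  where "emp_rhs w \<phi> n p h = (\<chi> j. emp_inner w n p (\<phi> j) h)"

lemma emp_norm_eq_sqrt_emp_inner: "emp_norm w n p u = sqrt (emp_inner w n p u u)"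
  by (simp add: emp_norm_def emp_inner_def power2_eq_square)

lemma emp_inner_commute: "emp_inner w n p u v = emp_inner w n p v u"
  by (simp add: emp_inner_def mult.commute)

lemma emp_inner_self_nonneg: "(\<And>x. w x > 0) \<Longrightarrow> 0 \<le> emp_inner w n p u u"
  unfolding emp_inner_def by (rule mult_nonneg_nonneg) (auto intro!: sum_nonneg divide_nonneg_pos)

lemma emp_inner_diff_left:
  "emp_inner w n p (\<lambda>x. u x - v x) z = emp_inner w n p u z - emp_inner w n p v z"
  by (simp add: emp_inner_def diff_divide_distrib left_diff_distrib sum_subtractf right_diff_distrib)

lemma emp_inner_diff_right:
  "emp_inner w n p z (\<lambda>x. u x - v x) = emp_inner w n p z u - emp_inner w n p z v"
  by (simp add: emp_inner_commute[of w n p z] emp_inner_diff_left)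

lemma emp_inner_diff_self:
  "emp_inner w n p (\<lambda>x. u x - v x) (\<lambda>x. u x - v x)
     = emp_inner w n p u u - 2 * emp_inner w n p u v + emp_inner w n p v v"
  by (simp add: emp_inner_diff_left emp_inner_diff_right emp_inner_commute[of w n p v u])

lemma emp_inner_vm_elem_left:
  "emp_inner w n p (vm_elem \<phi> c) z = (\<Sum>j\<in>UNIV. c $ j * emp_inner w n p (\<phi> j) z)"
proof -
  have "emp_inner w n p (vm_elem \<phi> c) z
      = (1 / real n) * (\<Sum>i<n. \<Sum>j\<in>UNIV. c $ j * (\<phi> j (p i) * z (p i) / w (p i)))"
    by (simp add: emp_inner_def vm_elem_def sum_distrib_right sum_divide_distrib mult.assoc)
  also have "\<dots> = (1 / real n) * (\<Sum>j\<in>UNIV. \<Sum>i<n. c $ j * (\<phi> j (p i) * z (p i) / w (p i)))"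
    by (subst sum.swap) simp
  also have "\<dots> = (\<Sum>j\<in>UNIV. c $ j * emp_inner w n p (\<phi> j) z)"
    by (simp add: emp_inner_def sum_distrib_left mult.left_commute)
  finally show ?thesis .
qed

lemma vm_elem_zero: "vm_elem \<phi> 0 = (\<lambda>x. 0)"
  by (simp add: vm_elem_def)

lemma vm_elem_diff: "vm_elem \<phi> (a - b) x = vm_elem \<phi> a x - vm_elem \<phi> b x"
  by (simp add: vm_elem_def sum_subtractf algebra_simps)

lemma emp_gram_nth: "emp_gram w \<phi> n p $ j $ k = emp_inner w n p (\<phi> j) (\<phi> k)"
  by (simp add: emp_gram_def emp_inner_def)

lemma transpose_emp_gram: "transpose (emp_gram w \<phi> n p) = emp_gram w \<phi> n p"
  by (simp add: transpose_def vec_eq_iff emp_gram_nth emp_inner_commute)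

lemma inner_emp_rhs: "d \<bullet> emp_rhs w \<phi> n p h = emp_inner w n p (vm_elem \<phi> d) h"
  by (simp add: emp_rhs_def inner_vec_def emp_inner_vm_elem_left)

lemma emp_gram_mult: "emp_gram w \<phi> n p *v c = emp_rhs w \<phi> n p (vm_elem \<phi> c)"
proof -
  have "(emp_gram w \<phi> n p *v c) $ i = emp_rhs w \<phi> n p (vm_elem \<phi> c) $ i" for i
  proof -
    have "(emp_gram w \<phi> n p *v c) $ i = (\<Sum>j\<in>UNIV. c $ j * emp_inner w n p (\<phi> j) (\<phi> i))"
      by (simp add: matrix_vector_mult_def emp_gram_nth emp_inner_commute[of w n p "\<phi> i"] mult.commute)
    also have "\<dots> = emp_rhs w \<phi> n p (vm_elem \<phi> c) $ i"
      by (simp add: emp_rhs_def emp_inner_vm_elem_left emp_inner_commute[of w n p "\<phi> i"])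
    finally show ?thesis .
  qed
  then show ?thesis
    by (simp add: vec_eq_iff)
qed

lemma inner_emp_gram_mult:
  "d \<bullet> (emp_gram w \<phi> n p *v c) = emp_inner w n p (vm_elem \<phi> d) (vm_elem \<phi> c)"
  by (simp add: emp_gram_mult inner_emp_rhs)

lemma emp_rhs_diff: "emp_rhs w \<phi> n p (\<lambda>x. u x - v x) = emp_rhs w \<phi> n p u - emp_rhs w \<phi> n p v"
  by (simp add: emp_rhs_def vec_eq_iff emp_inner_diff_right)

text \<open>The residual of a solution of the normal equations is empirically orthogonal to \<open>V\<^sub>m\<close>.\<close>

lemma emp_inner_residual_pythagoras:
  assumes normal: "emp_gram w \<phi> n p *v c = emp_rhs w \<phi> n p h"
  shows "emp_inner w n p (\<lambda>x. h x - vm_elem \<phi> d x) (\<lambda>x. h x - vm_elem \<phi> d x)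
    = emp_inner w n p (\<lambda>x. h x - vm_elem \<phi> c x) (\<lambda>x. h x - vm_elem \<phi> c x)
      + (d - c) \<bullet> (emp_gram w \<phi> n p *v (d - c))"
proof -
  define r where "r = (\<lambda>x. h x - vm_elem \<phi> c x)"
  have "emp_rhs w \<phi> n p r = 0"
    using normal by (simp add: r_def emp_rhs_diff emp_gram_mult)
  then have orth: "emp_inner w n p (vm_elem \<phi> (d - c)) r = 0"
    by (simp flip: inner_emp_rhs)
  have "(\<lambda>x. h x - vm_elem \<phi> d x) = (\<lambda>x. r x - vm_elem \<phi> (d - c) x)"
    by (simp add: r_def vm_elem_diff)
  then have "emp_inner w n p (\<lambda>x. h x - vm_elem \<phi> d x) (\<lambda>x. h x - vm_elem \<phi> d x)
      = emp_inner w n p r r + (d - c) \<bullet> (emp_gram w \<phi> n p *v (d - c))"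
    using orth emp_inner_commute[of w n p r "vm_elem \<phi> (d - c)"]
    by (simp add: emp_inner_diff_self inner_emp_gram_mult)
  then show ?thesis
    by (simp add: r_def)
qed

lemma normal_equations_solvable:
  fixes \<phi> :: "'m::finite \<Rightarrow> 'a \<Rightarrow> real"
  assumes pd: "\<And>c. c \<noteq> 0 \<Longrightarrow> 0 < c \<bullet> (emp_gram w \<phi> n p *v c)"
  obtains c where "emp_gram w \<phi> n p *v c = b"
proof -
  have "inj ((*v) (emp_gram w \<phi> n p))"
  proof (rule linear_injective_0[THEN iffD2, OF matrix_vector_mul_linear], intro allI impI)
    show "c = 0" if "emp_gram w \<phi> n p *v c = 0" for c
      using pd[of c] that by auto
  qed
  then have "surj ((*v) (emp_gram w \<phi> n p))"
    using linear_injective_imp_surjective[OF matrix_vector_mul_linear] by blast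
  then obtain c where "b = emp_gram w \<phi> n p *v c"
    by (meson surjD)
  then show ?thesis
    using that by simp
qed

lemma wls_proj_eq_normal_solution:
  fixes \<phi> :: "'m::finite \<Rightarrow> 'a \<Rightarrow> real"
  assumes w_pos: "\<And>x. w x > 0"
    and pd: "\<And>c. c \<noteq> 0 \<Longrightarrow> 0 < c \<bullet> (emp_gram w \<phi> n p *v c)"
    and normal: "emp_gram w \<phi> n p *v c = emp_rhs w \<phi> n p h"
  shows "wls_proj w \<phi> n p h = vm_elem \<phi> c"
proof -
  let ?F = "\<lambda>d. emp_inner w n p (\<lambda>x. h x - vm_elem \<phi> d x) (\<lambda>x. h x - vm_elem \<phi> d x)"
  have psd: "0 \<le> e \<bullet> (emp_gram w \<phi> n p *v e)" for e
    using pd[of e] by (cases "e = 0") auto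
  have F_ge: "?F c \<le> ?F d" for d
    using emp_inner_residual_pythagoras[OF normal, of d] psd[of "d - c"] by linarith
  have F_eq: "d = c" if "?F d \<le> ?F c" for d
  proof -
    have "(d - c) \<bullet> (emp_gram w \<phi> n p *v (d - c)) \<le> 0"
      using emp_inner_residual_pythagoras[OF normal, of d] that by linarith
    then have "d - c = 0"
      using pd[of "d - c"] by (meson not_le)
    then show ?thesis
      by simp
  qed
  show ?thesis
    unfolding wls_proj_def
  proof (rule the_equality)
    show "(\<exists>c'. vm_elem \<phi> c = vm_elem \<phi> c')
        \<and> (\<forall>d. emp_norm w n p (\<lambda>x. h x - vm_elem \<phi> c x) \<le> emp_norm w n p (\<lambda>x. h x - vm_elem \<phi> d x))"
      by (auto simp: emp_norm_eq_sqrt_emp_inner intro: F_ge)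
  next
    fix g
    assume "(\<exists>c'. g = vm_elem \<phi> c')
      \<and> (\<forall>d. emp_norm w n p (\<lambda>x. h x - g x) \<le> emp_norm w n p (\<lambda>x. h x - vm_elem \<phi> d x))"
    then obtain d where d: "g = vm_elem \<phi> d" and "emp_norm w n p (\<lambda>x. h x - g x) \<le> emp_norm w n p (\<lambda>x. h x - vm_elem \<phi> c x)"
      by blast
    then have "?F d \<le> ?F c"
      using emp_inner_self_nonneg[of w, OF w_pos] by (simp add: emp_norm_eq_sqrt_emp_inner)
    then show "g = vm_elem \<phi> c"
      using F_eq d by blast
  qed
qed

lemma wls_proj_coeff_dist_le:
  fixes \<phi> :: "'m::finite \<Rightarrow> 'a \<Rightarrow> real"
  assumes w_pos: "\<And>x. w x > 0"
    and r: "0 < r" "r \<le> lambda_min (emp_gram w \<phi> n p)"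
  obtains c where "wls_proj w \<phi> n p h = vm_elem \<phi> c"
    and "(norm (c - c0))\<^sup>2
      \<le> inverse r * emp_inner w n p (\<lambda>x. h x - vm_elem \<phi> c0 x) (\<lambda>x. h x - vm_elem \<phi> c0 x)"
proof -
  let ?G = "emp_gram w \<phi> n p"
  have rayleigh: "r * (d \<bullet> d) \<le> d \<bullet> (?G *v d)" for d
    using lambda_min_le_rayleigh[OF transpose_emp_gram, of w \<phi> n p d] r
    by (meson inner_ge_zero mult_right_mono order_trans)
  have pd: "0 < d \<bullet> (?G *v d)" if "d \<noteq> 0" for d
    using rayleigh[of d] r that by (smt (verit) inner_gt_zero_iff mult_pos_pos)
  obtain c where normal: "?G *v c = emp_rhs w \<phi> n p h"
    using normal_equations_solvable[OF pd] by blast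
  have "(c0 - c) \<bullet> (?G *v (c0 - c))
      \<le> emp_inner w n p (\<lambda>x. h x - vm_elem \<phi> c0 x) (\<lambda>x. h x - vm_elem \<phi> c0 x)"
    using emp_inner_residual_pythagoras[OF normal, of c0]
      emp_inner_self_nonneg[of w n p "\<lambda>x. h x - vm_elem \<phi> c x", OF w_pos] by linarith
  then have "r * (norm (c - c0))\<^sup>2
      \<le> emp_inner w n p (\<lambda>x. h x - vm_elem \<phi> c0 x) (\<lambda>x. h x - vm_elem \<phi> c0 x)"
    using rayleigh[of "c0 - c"] by (simp add: power2_norm_eq_inner norm_minus_commute[of c])
  then have "(norm (c - c0))\<^sup>2
      \<le> inverse r * emp_inner w n p (\<lambda>x. h x - vm_elem \<phi> c0 x) (\<lambda>x. h x - vm_elem \<phi> c0 x)"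
    using r by (simp add: field_simps)
  with wls_proj_eq_normal_solution[OF w_pos pd normal] show ?thesis
    using that by blast
qed

section \<open>Square-integrable functions and the space \<open>V\<^sub>m\<close>\<close>

lemma abs_mult_le_sum_squares: "\<bar>a * b\<bar> \<le> a\<^sup>2 + b\<^sup>2" for a b :: real
proof -
  have "0 \<le> (\<bar>a\<bar> - \<bar>b\<bar>)\<^sup>2"
    by simp
  then have "2 * (\<bar>a\<bar> * \<bar>b\<bar>) \<le> a\<^sup>2 + b\<^sup>2"
    by (simp add: power2_diff)
  moreover have "0 \<le> \<bar>a\<bar> * \<bar>b\<bar>"
    by simp
  ultimately show ?thesis
    unfolding abs_mult by linarith
qed

lemma integrable_mult_if_square_integrable:
  fixes u v :: "'a \<Rightarrow> real"
  assumes "u \<in> borel_measurable \<mu>" "v \<in> borel_measurable \<mu>"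
    and "integrable \<mu> (\<lambda>x. (u x)\<^sup>2)" "integrable \<mu> (\<lambda>x. (v x)\<^sup>2)"
  shows "integrable \<mu> (\<lambda>x. u x * v x)"
  by (rule Bochner_Integration.integrable_bound[where f = "\<lambda>x. (u x)\<^sup>2 + (v x)\<^sup>2"])
    (use assms abs_mult_le_sum_squares in auto)

lemma square_integrable_diff:
  fixes u v :: "'a \<Rightarrow> real"
  assumes "u \<in> borel_measurable \<mu>" "v \<in> borel_measurable \<mu>"
    and "integrable \<mu> (\<lambda>x. (u x)\<^sup>2)" "integrable \<mu> (\<lambda>x. (v x)\<^sup>2)"
  shows "integrable \<mu> (\<lambda>x. (u x - v x)\<^sup>2)"
proof -
  have "(\<lambda>x. (u x - v x)\<^sup>2) = (\<lambda>x. (u x)\<^sup>2 - 2 * (u x * v x) + (v x)\<^sup>2)"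
    by (simp add: power2_diff algebra_simps)
  then show ?thesis
    using assms integrable_mult_if_square_integrable[OF assms] by auto
qed

lemma l2norm_sq: "(l2norm \<mu> f)\<^sup>2 = (\<integral>x. (f x)\<^sup>2 \<partial>\<mu>)"
  by (simp add: l2norm_def)

locale orthonormal_system =
  fixes \<mu> :: "'a measure" and \<phi> :: "'m::finite \<Rightarrow> 'a \<Rightarrow> real"
  assumes basis_measurable: "\<And>i. \<phi> i \<in> borel_measurable \<mu>"
    and basis_square_integrable: "\<And>i. integrable \<mu> (\<lambda>x. (\<phi> i x)\<^sup>2)"
    and basis_orthonormal: "\<And>i j. (\<integral>x. \<phi> i x * \<phi> j x \<partial>\<mu>) = (if i = j then 1 else 0)"
begin

text \<open>Coefficients of the \<open>L\<^sup>2\<close>-orthogonal projection \<open>P\<^sub>V\<^sub>m f\<close>.\<close>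

definition l2_coeffs :: "('a \<Rightarrow> real) \<Rightarrow> real^'m"
  where "l2_coeffs f = (\<chi> j. \<integral>x. f x * \<phi> j x \<partial>\<mu>)"

lemma integrable_basis_mult:
  "integrable \<mu> (\<lambda>x. \<phi> i x * \<phi> j x)"
  by (intro integrable_mult_if_square_integrable basis_measurable basis_square_integrable)

lemma vm_elem_measurable: "vm_elem \<phi> c \<in> borel_measurable \<mu>"
  unfolding vm_elem_def using basis_measurable by measurable

lemma square_integrable_vm_elem: "integrable \<mu> (\<lambda>x. (vm_elem \<phi> c x)\<^sup>2)"
proof -
  have "(\<lambda>x. (vm_elem \<phi> c x)\<^sup>2) = (\<lambda>x. \<Sum>j\<in>UNIV. \<Sum>k\<in>UNIV. c $ j * c $ k * (\<phi> j x * \<phi> k x))"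
    by (simp add: vm_elem_def power2_eq_square sum_product mult.commute mult.left_commute)
  then show ?thesis
    by (auto intro!: integrable_sum integrable_mult_right integrable_basis_mult)
qed

lemma integral_vm_elem_mult_basis: "(\<integral>x. vm_elem \<phi> c x * \<phi> j x \<partial>\<mu>) = c $ j"
proof -
  have "(\<integral>x. vm_elem \<phi> c x * \<phi> j x \<partial>\<mu>) = (\<integral>x. (\<Sum>k\<in>UNIV. c $ k * (\<phi> k x * \<phi> j x)) \<partial>\<mu>)"
    by (simp add: vm_elem_def sum_distrib_right mult.assoc)
  also have "\<dots> = (\<Sum>k\<in>UNIV. c $ k * (if k = j then 1 else 0))"
    by (subst Bochner_Integration.integral_sum)
      (auto intro!: integrable_mult_right integrable_basis_mult simp: basis_orthonormal)
  finally show ?thesis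
    by (simp add: if_distrib cong: if_cong)
qed

lemma integral_l2_residual_mult_basis:
  assumes f: "f \<in> borel_measurable \<mu>" "integrable \<mu> (\<lambda>x. (f x)\<^sup>2)"
  shows "(\<integral>x. (f x - vm_elem \<phi> (l2_coeffs f) x) * \<phi> j x \<partial>\<mu>) = 0"
proof -
  have "integrable \<mu> (\<lambda>x. f x * \<phi> j x)" "integrable \<mu> (\<lambda>x. vm_elem \<phi> (l2_coeffs f) x * \<phi> j x)"
    by (intro integrable_mult_if_square_integrable f basis_measurable basis_square_integrable
        vm_elem_measurable square_integrable_vm_elem)+
  then show ?thesis
    by (simp add: left_diff_distrib integral_vm_elem_mult_basis l2_coeffs_def)
qed

lemma integral_sq_diff_vm_elem_orthogonal:
  assumes u: "u \<in> borel_measurable \<mu>" "integrable \<mu> (\<lambda>x. (u x)\<^sup>2)"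
    and u_orth: "\<And>j. (\<integral>x. u x * \<phi> j x \<partial>\<mu>) = 0"
  shows "(\<integral>x. (u x - vm_elem \<phi> e x)\<^sup>2 \<partial>\<mu>) = (\<integral>x. (u x)\<^sup>2 \<partial>\<mu>) + (norm e)\<^sup>2"
proof -
  have integrable_u_basis: "integrable \<mu> (\<lambda>x. u x * \<phi> j x)" for j
    by (intro integrable_mult_if_square_integrable u basis_measurable basis_square_integrable)
  have "(\<lambda>x. (u x - vm_elem \<phi> e x)\<^sup>2) = (\<lambda>x. (u x)\<^sup>2 - 2 * (\<Sum>j\<in>UNIV. e $ j * (u x * \<phi> j x))
      + (\<Sum>j\<in>UNIV. \<Sum>k\<in>UNIV. e $ j * e $ k * (\<phi> j x * \<phi> k x)))"
    by (simp add: vm_elem_def power2_eq_square algebra_simps sum_distrib_left sum_product)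
  then have "(\<integral>x. (u x - vm_elem \<phi> e x)\<^sup>2 \<partial>\<mu>) = (\<integral>x. (u x)\<^sup>2 \<partial>\<mu>)
      - 2 * (\<Sum>j\<in>UNIV. e $ j * (\<integral>x. u x * \<phi> j x \<partial>\<mu>))
      + (\<Sum>j\<in>UNIV. \<Sum>k\<in>UNIV. e $ j * e $ k * (\<integral>x. \<phi> j x * \<phi> k x \<partial>\<mu>))"
    using u integrable_u_basis integrable_basis_mult
    by (simp add: Bochner_Integration.integral_sum integrable_sum)
  also have "\<dots> = (\<integral>x. (u x)\<^sup>2 \<partial>\<mu>) + (norm e)\<^sup>2"
    by (simp add: u_orth basis_orthonormal power2_norm_eq_inner inner_vec_def if_distrib cong: if_cong)
  finally show ?thesis .
qed

lemma l2norm_vm_elem: "(l2norm \<mu> (vm_elem \<phi> c))\<^sup>2 = (norm c)\<^sup>2"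
  using integral_sq_diff_vm_elem_orthogonal[of "\<lambda>x. 0" c] by (simp add: l2norm_sq)

lemma l2norm_sq_diff_vm_elem:
  assumes f: "f \<in> borel_measurable \<mu>" "integrable \<mu> (\<lambda>x. (f x)\<^sup>2)"
  shows "(l2norm \<mu> (\<lambda>x. f x - vm_elem \<phi> c x))\<^sup>2
    = (l2norm \<mu> (\<lambda>x. f x - vm_elem \<phi> (l2_coeffs f) x))\<^sup>2 + (norm (c - l2_coeffs f))\<^sup>2"
proof -
  let ?u = "\<lambda>x. f x - vm_elem \<phi> (l2_coeffs f) x"
  have "?u \<in> borel_measurable \<mu>" "integrable \<mu> (\<lambda>x. (?u x)\<^sup>2)"
    using f vm_elem_measurable square_integrable_vm_elem by (auto intro: square_integrable_diff)
  moreover have "(\<lambda>x. f x - vm_elem \<phi> c x) = (\<lambda>x. ?u x - vm_elem \<phi> (c - l2_coeffs f) x)"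
    by (simp add: vm_elem_diff)
  ultimately show ?thesis
    using integral_sq_diff_vm_elem_orthogonal integral_l2_residual_mult_basis[OF f]
    by (simp add: l2norm_sq)
qed

lemma INF_l2norm_sq_diff_vm_elem:
  assumes f: "f \<in> borel_measurable \<mu>" "integrable \<mu> (\<lambda>x. (f x)\<^sup>2)"
  shows "(INF c. (l2norm \<mu> (\<lambda>x. f x - vm_elem \<phi> c x))\<^sup>2)
    = (l2norm \<mu> (\<lambda>x. f x - vm_elem \<phi> (l2_coeffs f) x))\<^sup>2"
proof -
  let ?E = "\<lambda>c. (l2norm \<mu> (\<lambda>x. f x - vm_elem \<phi> c x))\<^sup>2"
  have le: "?E (l2_coeffs f) \<le> ?E c" for c
    using l2norm_sq_diff_vm_elem[OF f, of c] zero_le_power2[of "norm (c - l2_coeffs f)"] by linarith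
  have "bdd_below (range ?E)"
    by (rule bdd_belowI[of _ 0]) auto
  then have "(INF c. ?E c) \<le> ?E (l2_coeffs f)"
    by (rule cINF_lower) simp
  moreover have "?E (l2_coeffs f) \<le> (INF c. ?E c)"
    by (rule cINF_greatest) (use le in auto)
  ultimately show ?thesis
    by (rule antisym)
qed

end

section \<open>Random samples\<close>

lemma divide_ennreal_le:
  assumes "X \<le> ennreal a" "0 \<le> a" "0 < q"
  shows "X / ennreal q \<le> ennreal (inverse q * a)"
  using divide_right_mono_ennreal[OF assms(1), of "ennreal q"] divide_ennreal[OF assms(2,3)]
  by (simp add: divide_inverse mult.commute)

locale weighted_sampling =
  fixes \<mu> :: "'a measure" and w wt :: "'a \<Rightarrow> real"
    and M :: "'w measure" and xs :: "'w \<Rightarrow> nat \<Rightarrow> 'a" and n :: nat and \<beta> :: real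
  assumes weight_measurable: "w \<in> borel_measurable \<mu>"
    and weight_pos: "\<And>x. 0 < w x"
    and sample_measurable: "\<And>i. i < n \<Longrightarrow> (\<lambda>\<omega>. xs \<omega> i) \<in> measurable M \<mu>"
    and density_measurable: "wt \<in> borel_measurable \<mu>"
    and density_nonneg: "\<And>x. 0 \<le> wt x"
    and sample_distr: "\<And>i. i < n \<Longrightarrow> distr M \<mu> (\<lambda>\<omega>. xs \<omega> i) = density \<mu> (\<lambda>x. ennreal (wt x))"
    and density_le: "\<And>x. wt x \<le> \<beta> * w x"
begin

lemma beta_nonneg: "0 \<le> \<beta>"
proof -
  have "0 \<le> \<beta> * w undefined"
    using density_nonneg density_le by (rule order_trans)
  then show ?thesis
    using weight_pos[of undefined] by (simp add: zero_le_mult_iff)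
qed

lemma emp_inner_self_measurable:
  assumes "h \<in> borel_measurable \<mu>"
  shows "(\<lambda>\<omega>. emp_inner w n (xs \<omega>) h h) \<in> borel_measurable M"
proof -
  have "(\<lambda>x. h x * h x / w x) \<in> borel_measurable \<mu>"
    using assms weight_measurable by measurable
  then have "(\<lambda>\<omega>. h (xs \<omega> i) * h (xs \<omega> i) / w (xs \<omega> i)) \<in> borel_measurable M" if "i < n" for i
    using sample_measurable[OF that] by (rule measurable_compose[rotated])
  then show ?thesis
    unfolding emp_inner_def by measurable
qed

lemma nn_integral_sample_sq_div_weight_le:
  assumes i: "i < n" and h: "h \<in> borel_measurable \<mu>" "integrable \<mu> (\<lambda>x. (h x)\<^sup>2)"
  shows "(\<integral>\<^sup>+\<omega>. ennreal ((h (xs \<omega> i))\<^sup>2 / w (xs \<omega> i)) \<partial>M) \<le> ennreal (\<beta> * (\<integral>x. (h x)\<^sup>2 \<partial>\<mu>))"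
proof -
  let ?q = "\<lambda>x. (h x)\<^sup>2 / w x"
  have q_measurable: "?q \<in> borel_measurable \<mu>"
    using h weight_measurable by measurable
  have "(\<integral>\<^sup>+\<omega>. ennreal (?q (xs \<omega> i)) \<partial>M) = (\<integral>\<^sup>+x. ennreal (?q x) \<partial>distr M \<mu> (\<lambda>\<omega>. xs \<omega> i))"
    using sample_measurable[OF i] q_measurable by (simp add: nn_integral_distr)
  also have "\<dots> = (\<integral>\<^sup>+x. ennreal (wt x) * ennreal (?q x) \<partial>\<mu>)"
    using sample_distr[OF i] density_measurable q_measurable by (simp add: nn_integral_density)
  also have "\<dots> \<le> (\<integral>\<^sup>+x. ennreal \<beta> * ennreal ((h x)\<^sup>2) \<partial>\<mu>)"
  proof (rule nn_integral_mono)
    fix x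
    have "wt x * ?q x \<le> \<beta> * w x * ?q x"
      using density_le[of x] weight_pos[of x] by (intro mult_right_mono) auto
    also have "\<dots> = \<beta> * (h x)\<^sup>2"
      using weight_pos[of x] by simp
    finally show "ennreal (wt x) * ennreal (?q x) \<le> ennreal \<beta> * ennreal ((h x)\<^sup>2)"
      using weight_pos[of x] beta_nonneg density_nonneg[of x]
      by (simp add: ennreal_mult[symmetric] ennreal_leI)
  qed
  also have "\<dots> = ennreal (\<beta> * (\<integral>x. (h x)\<^sup>2 \<partial>\<mu>))"
    using h beta_nonneg by (simp add: nn_integral_cmult nn_integral_eq_integral ennreal_mult)
  finally show ?thesis .
qed

text \<open>Only the marginal distributions of the samples enter; they need not be independent.\<close>

lemma nn_integral_emp_inner_self_le:
  assumes h: "h \<in> borel_measurable \<mu>" "integrable \<mu> (\<lambda>x. (h x)\<^sup>2)"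
  shows "(\<integral>\<^sup>+\<omega>. ennreal (emp_inner w n (xs \<omega>) h h) \<partial>M) \<le> ennreal (\<beta> * (\<integral>x. (h x)\<^sup>2 \<partial>\<mu>))"
proof -
  let ?B = "\<beta> * (\<integral>x. (h x)\<^sup>2 \<partial>\<mu>)"
  define q where "q = (\<lambda>x. (h x)\<^sup>2 / w x)"
  have q_nonneg: "0 \<le> q x" for x
    using weight_pos[of x] by (simp add: q_def)
  have "q \<in> borel_measurable \<mu>"
    unfolding q_def using h weight_measurable by measurable
  then have q_sample_measurable: "(\<lambda>\<omega>. ennreal (q (xs \<omega> i))) \<in> borel_measurable M" if "i < n" for i
    using sample_measurable[OF that] by (simp add: measurable_compose)
  have "ennreal (emp_inner w n (xs \<omega>) h h) = ennreal (1 / real n) * (\<Sum>i<n. ennreal (q (xs \<omega> i)))"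
    for \<omega>
  proof -
    have "emp_inner w n (xs \<omega>) h h = (1 / real n) * (\<Sum>i<n. q (xs \<omega> i))"
      by (simp add: emp_inner_def q_def power2_eq_square)
    then show ?thesis
      by (simp add: q_nonneg sum_nonneg sum_ennreal flip: ennreal_mult)
  qed
  moreover have "(\<lambda>\<omega>. \<Sum>i<n. ennreal (q (xs \<omega> i))) \<in> borel_measurable M"
    using q_sample_measurable by (intro borel_measurable_sum) auto
  ultimately have "(\<integral>\<^sup>+\<omega>. ennreal (emp_inner w n (xs \<omega>) h h) \<partial>M)
      = ennreal (1 / real n) * (\<integral>\<^sup>+\<omega>. (\<Sum>i<n. ennreal (q (xs \<omega> i))) \<partial>M)"
    by (simp add: nn_integral_cmult)
  also have "\<dots> = ennreal (1 / real n) * (\<Sum>i<n. \<integral>\<^sup>+\<omega>. ennreal (q (xs \<omega> i)) \<partial>M)"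
    using nn_integral_sum[of "{..<n}" "\<lambda>i \<omega>. ennreal (q (xs \<omega> i))" M] q_sample_measurable by simp
  also have "\<dots> \<le> ennreal (1 / real n) * (\<Sum>i<n. ennreal ?B)"
    using nn_integral_sample_sq_div_weight_le[OF _ h] by (intro mult_left_mono sum_mono) (auto simp: q_def)
  also have "\<dots> = ennreal ((1 / real n) * (real n * ?B))"
    using beta_nonneg by (simp add: ennreal_mult[symmetric] ennreal_of_nat_eq_real_of_nat)
  also have "\<dots> \<le> ennreal ?B"
    using beta_nonneg by (intro ennreal_leI) (cases "n = 0", auto)
  finally show ?thesis .
qed

lemma nn_integral_scaled_emp_inner_self_le:
  assumes "0 \<le> k" and h: "h \<in> borel_measurable \<mu>" "integrable \<mu> (\<lambda>x. (h x)\<^sup>2)"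
  shows "(\<integral>\<^sup>+\<omega>. ennreal (k * emp_inner w n (xs \<omega>) h h) \<partial>M) \<le> ennreal (k * \<beta> * (\<integral>x. (h x)\<^sup>2 \<partial>\<mu>))"
proof -
  have "(\<integral>\<^sup>+\<omega>. ennreal (k * emp_inner w n (xs \<omega>) h h) \<partial>M)
      = ennreal k * (\<integral>\<^sup>+\<omega>. ennreal (emp_inner w n (xs \<omega>) h h) \<partial>M)"
    using assms emp_inner_self_nonneg[of w, OF weight_pos] emp_inner_self_measurable[OF h(1)]
    by (simp add: ennreal_mult nn_integral_cmult)
  also have "\<dots> \<le> ennreal k * ennreal (\<beta> * (\<integral>x. (h x)\<^sup>2 \<partial>\<mu>))"
    by (intro mult_left_mono nn_integral_emp_inner_self_le h) simp
  also have "\<dots> = ennreal (k * \<beta> * (\<integral>x. (h x)\<^sup>2 \<partial>\<mu>))"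
    using assms beta_nonneg by (simp add: ennreal_mult[symmetric] mult.assoc)
  finally show ?thesis .
qed

end

section \<open>Weighted least squares on well-conditioned samples\<close>

locale wls_sampling =
  orthonormal_system \<mu> \<phi> + weighted_sampling \<mu> w wt M xs n \<beta>
  for \<mu> :: "'a measure" and \<phi> :: "'m::finite \<Rightarrow> 'a \<Rightarrow> real"
    and w wt :: "'a \<Rightarrow> real" and M :: "'w measure" and xs :: "'w \<Rightarrow> nat \<Rightarrow> 'a"
    and n :: nat and \<beta> :: real +
  assumes finite_measure_M: "finite_measure M"
begin

definition well_conditioned :: "real \<Rightarrow> 'w set"
  where "well_conditioned \<delta> = {\<omega> \<in> space M. lambda_min (emp_gram w \<phi> n (xs \<omega>)) \<ge> 1 - \<delta>}"

lemma wls_proj_coeff_dist_le_on_well_conditioned: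
  assumes "\<delta> < 1" "\<omega> \<in> well_conditioned \<delta>"
  obtains c where "wls_proj w \<phi> n (xs \<omega>) h = vm_elem \<phi> c"
    and "(norm (c - c0))\<^sup>2 \<le> inverse (1 - \<delta>)
      * emp_inner w n (xs \<omega>) (\<lambda>x. h x - vm_elem \<phi> c0 x) (\<lambda>x. h x - vm_elem \<phi> c0 x)"
  using wls_proj_coeff_dist_le[of w "1 - \<delta>" \<phi> n "xs \<omega>" h c0] weight_pos assms
  by (auto simp: well_conditioned_def)

lemma nn_integral_wls_proj_le:
  assumes "\<delta> < 1" and f: "f \<in> borel_measurable \<mu>" "integrable \<mu> (\<lambda>x. (f x)\<^sup>2)"
  shows "(\<integral>\<^sup>+\<omega>\<in>well_conditioned \<delta>. ennreal ((l2norm \<mu> (wls_proj w \<phi> n (xs \<omega>) f))\<^sup>2) \<partial>M)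
    \<le> ennreal (inverse (1 - \<delta>) * \<beta> * (l2norm \<mu> f)\<^sup>2)"
proof -
  have "(\<integral>\<^sup>+\<omega>\<in>well_conditioned \<delta>. ennreal ((l2norm \<mu> (wls_proj w \<phi> n (xs \<omega>) f))\<^sup>2) \<partial>M)
      \<le> (\<integral>\<^sup>+\<omega>. ennreal (inverse (1 - \<delta>) * emp_inner w n (xs \<omega>) f f) \<partial>M)"
  proof (rule nn_integral_mono)
    fix \<omega>
    show "ennreal ((l2norm \<mu> (wls_proj w \<phi> n (xs \<omega>) f))\<^sup>2) * indicator (well_conditioned \<delta>) \<omega>
        \<le> ennreal (inverse (1 - \<delta>) * emp_inner w n (xs \<omega>) f f)"
    proof (cases "\<omega> \<in> well_conditioned \<delta>")
      case True
      with \<open>\<delta> < 1\<close> obtain c where "wls_proj w \<phi> n (xs \<omega>) f = vm_elem \<phi> c"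
        and "(norm (c - 0))\<^sup>2 \<le> inverse (1 - \<delta>)
          * emp_inner w n (xs \<omega>) (\<lambda>x. f x - vm_elem \<phi> 0 x) (\<lambda>x. f x - vm_elem \<phi> 0 x)"
        by (rule wls_proj_coeff_dist_le_on_well_conditioned)
      then show ?thesis
        using True by (simp add: l2norm_vm_elem vm_elem_zero ennreal_leI)
    qed simp
  qed
  also have "\<dots> \<le> ennreal (inverse (1 - \<delta>) * \<beta> * (l2norm \<mu> f)\<^sup>2)"
    using nn_integral_scaled_emp_inner_self_le[OF _ f] \<open>\<delta> < 1\<close> by (simp add: l2norm_sq)
  finally show ?thesis .
qed

lemma nn_integral_wls_error_le:
  assumes "\<delta> < 1" "well_conditioned \<delta> \<in> sets M"
    and f: "f \<in> borel_measurable \<mu>" "integrable \<mu> (\<lambda>x. (f x)\<^sup>2)"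
  shows "(\<integral>\<^sup>+\<omega>\<in>well_conditioned \<delta>. ennreal ((l2norm \<mu> (\<lambda>x. f x - wls_proj w \<phi> n (xs \<omega>) f x))\<^sup>2) \<partial>M)
    \<le> ennreal ((measure M (well_conditioned \<delta>) + inverse (1 - \<delta>) * \<beta>)
        * (INF c. (l2norm \<mu> (\<lambda>x. f x - vm_elem \<phi> c x))\<^sup>2))"
proof -
  let ?S = "well_conditioned \<delta>" and ?k = "inverse (1 - \<delta>)"
  define u where "u = (\<lambda>x. f x - vm_elem \<phi> (l2_coeffs f) x)"
  define D where "D = (l2norm \<mu> u)\<^sup>2"
  have u: "u \<in> borel_measurable \<mu>" "integrable \<mu> (\<lambda>x. (u x)\<^sup>2)"
    unfolding u_def using f vm_elem_measurable square_integrable_vm_elem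
    by (auto intro: square_integrable_diff)
  have "0 \<le> D" "0 < 1 - \<delta>"
    using \<open>\<delta> < 1\<close> by (simp_all add: D_def)
  have "(\<integral>\<^sup>+\<omega>\<in>?S. ennreal ((l2norm \<mu> (\<lambda>x. f x - wls_proj w \<phi> n (xs \<omega>) f x))\<^sup>2) \<partial>M)
      \<le> (\<integral>\<^sup>+\<omega>. ennreal D * indicator ?S \<omega> + ennreal (?k * emp_inner w n (xs \<omega>) u u) \<partial>M)"
  proof (rule nn_integral_mono)
    fix \<omega>
    show "ennreal ((l2norm \<mu> (\<lambda>x. f x - wls_proj w \<phi> n (xs \<omega>) f x))\<^sup>2) * indicator ?S \<omega>
        \<le> ennreal D * indicator ?S \<omega> + ennreal (?k * emp_inner w n (xs \<omega>) u u)"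
    proof (cases "\<omega> \<in> ?S")
      case True
      with \<open>\<delta> < 1\<close> obtain c where c: "wls_proj w \<phi> n (xs \<omega>) f = vm_elem \<phi> c"
        and "(norm (c - l2_coeffs f))\<^sup>2 \<le> ?k * emp_inner w n (xs \<omega>) u u"
        unfolding u_def by (rule wls_proj_coeff_dist_le_on_well_conditioned)
      then have "(l2norm \<mu> (\<lambda>x. f x - wls_proj w \<phi> n (xs \<omega>) f x))\<^sup>2
          \<le> D + ?k * emp_inner w n (xs \<omega>) u u"
        using l2norm_sq_diff_vm_elem[OF f, of c] by (simp add: D_def u_def)
      then show ?thesis
        using True \<open>0 \<le> D\<close> \<open>0 < 1 - \<delta>\<close> emp_inner_self_nonneg[of w, OF weight_pos]
        by (simp add: ennreal_plus[symmetric] ennreal_leI del: ennreal_plus)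
    qed simp
  qed
  also have "\<dots> = ennreal D * emeasure M ?S + (\<integral>\<^sup>+\<omega>. ennreal (?k * emp_inner w n (xs \<omega>) u u) \<partial>M)"
    using assms(2) emp_inner_self_measurable[OF u(1)]
    by (simp add: nn_integral_add nn_integral_cmult_indicator)
  also have "\<dots> \<le> ennreal D * ennreal (measure M ?S) + ennreal (?k * \<beta> * D)"
    using nn_integral_scaled_emp_inner_self_le[OF _ u] \<open>0 < 1 - \<delta>\<close>
    by (intro add_mono) (simp_all add: finite_measure.emeasure_eq_measure[OF finite_measure_M] D_def l2norm_sq)
  also have "\<dots> = ennreal ((measure M ?S + ?k * \<beta>) * D)"
    using \<open>0 \<le> D\<close> \<open>0 < 1 - \<delta>\<close> beta_nonneg
    by (simp add: ennreal_mult[symmetric] ennreal_plus[symmetric] algebra_simps del: ennreal_plus)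
  finally show ?thesis
    by (simp add: INF_l2norm_sq_diff_vm_elem[OF f] D_def u_def)
qed

end

theorem mainTheorem2:
  fixes \<mu> :: "'a::polish_space measure"
    and \<phi> :: "'m::finite \<Rightarrow> 'a \<Rightarrow> real"
    and w wt f :: "'a \<Rightarrow> real"
    and M :: "'w measure"
    and xs :: "'w \<Rightarrow> nat \<Rightarrow> 'a"
    and n :: nat
    and \<beta> \<delta> :: real
  assumes mu_borel: "sets \<mu> = sets borel"
    and mu_prob: "prob_space \<mu>"
    and phi_meas: "\<And>i. \<phi> i \<in> borel_measurable \<mu>"
    and phi_L2: "\<And>i. integrable \<mu> (\<lambda>x. (\<phi> i x)\<^sup>2)"
    and phi_orth: "\<And>i j. (\<integral>x. \<phi> i x * \<phi> j x \<partial>\<mu>) = (if i = j then 1 else 0)"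
    and w_meas: "w \<in> borel_measurable \<mu>"
    and w_pos: "\<And>x. w x > 0"
    and M_prob: "prob_space M"
    and xs_meas: "\<And>i. i < n \<Longrightarrow> (\<lambda>\<omega>. xs \<omega> i) \<in> measurable M \<mu>"
    and wt_meas: "wt \<in> borel_measurable \<mu>"
    and wt_nonneg: "\<And>x. wt x \<ge> 0"
    and wt_dens: "(\<integral>x. wt x \<partial>\<mu>) = 1"
    and marginals: "\<And>i. i < n \<Longrightarrow> distr M \<mu> (\<lambda>\<omega>. xs \<omega> i) = density \<mu> (\<lambda>x. ennreal (wt x))"
    and beta_pos: "\<beta> > 0"
    and wt_le: "\<And>x. wt x \<le> \<beta> * w x"
    and delta: "0 < \<delta>" "\<delta> < 1"
    and S_pos: "measure M {\<omega> \<in> space M. lambda_min (emp_gram w \<phi> n (xs \<omega>)) \<ge> 1 - \<delta>} > 0"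
    and f_meas: "f \<in> borel_measurable \<mu>"
    and f_L2: "integrable \<mu> (\<lambda>x. (f x)\<^sup>2)"
  shows "((\<integral>\<^sup>+\<omega>\<in>{\<omega> \<in> space M. lambda_min (emp_gram w \<phi> n (xs \<omega>)) \<ge> 1 - \<delta>}. ennreal ((l2norm \<mu> (wls_proj w \<phi> n (xs \<omega>) f))\<^sup>2) \<partial>M)
             / ennreal (measure M {\<omega> \<in> space M. lambda_min (emp_gram w \<phi> n (xs \<omega>)) \<ge> 1 - \<delta>})
           \<le> ennreal (inverse (measure M {\<omega> \<in> space M. lambda_min (emp_gram w \<phi> n (xs \<omega>)) \<ge> 1 - \<delta>}) * inverse (1 - \<delta>) * \<beta> * (l2norm \<mu> f)\<^sup>2))
       \<and> ((\<integral>\<^sup>+\<omega>\<in>{\<omega> \<in> space M. lambda_min (emp_gram w \<phi> n (xs \<omega>)) \<ge> 1 - \<delta>}. ennreal ((l2norm \<mu> (\<lambda>x. f x - wls_proj w \<phi> n (xs \<omega>) f x))\<^sup>2) \<partial>M)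
             / ennreal (measure M {\<omega> \<in> space M. lambda_min (emp_gram w \<phi> n (xs \<omega>)) \<ge> 1 - \<delta>})
           \<le> ennreal ((1 + inverse (measure M {\<omega> \<in> space M. lambda_min (emp_gram w \<phi> n (xs \<omega>)) \<ge> 1 - \<delta>}) * inverse (1 - \<delta>) * \<beta>)
                      * (INF c. (l2norm \<mu> (\<lambda>x. f x - vm_elem \<phi> c x))\<^sup>2)))"
proof -
  interpret wls_sampling \<mu> \<phi> w wt M xs n \<beta>
    using phi_meas phi_L2 phi_orth w_meas w_pos xs_meas wt_meas wt_nonneg marginals wt_le
      prob_space.finite_measure[OF M_prob]
    by (simp add: wls_sampling_def wls_sampling_axioms_def orthonormal_system_def
        weighted_sampling_def)
  let ?S = "well_conditioned \<delta>"
  let ?P = "measure M ?S" and ?k = "inverse (1 - \<delta>) * \<beta>"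
  let ?D = "INF c. (l2norm \<mu> (\<lambda>x. f x - vm_elem \<phi> c x))\<^sup>2"
  have P: "0 < ?P"
    using S_pos by (simp add: well_conditioned_def)
  text \<open>\<open>measure\<close> vanishes outside \<open>sets M\<close>, so positivity of \<open>P(S\<^sub>\<delta>)\<close> makes \<open>S\<^sub>\<delta>\<close> an event.\<close>
  then have "?S \<in> sets M"
    using measure_notin_sets[of ?S M] by auto
  have "0 \<le> ?k" "0 \<le> ?D"
    using delta beta_nonneg by (auto intro: cINF_greatest)
  have norm_bound: "(\<integral>\<^sup>+\<omega>\<in>?S. ennreal ((l2norm \<mu> (wls_proj w \<phi> n (xs \<omega>) f))\<^sup>2) \<partial>M)
      / ennreal ?P \<le> ennreal (inverse ?P * (?k * (l2norm \<mu> f)\<^sup>2))"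
    using nn_integral_wls_proj_le[OF delta(2) f_meas f_L2] \<open>0 \<le> ?k\<close> P
    by (intro divide_ennreal_le) simp_all
  have "(\<integral>\<^sup>+\<omega>\<in>?S. ennreal ((l2norm \<mu> (\<lambda>x. f x - wls_proj w \<phi> n (xs \<omega>) f x))\<^sup>2) \<partial>M)
      / ennreal ?P \<le> ennreal (inverse ?P * ((?P + ?k) * ?D))"
    using nn_integral_wls_error_le[OF delta(2) \<open>?S \<in> sets M\<close> f_meas f_L2] \<open>0 \<le> ?k\<close> \<open>0 \<le> ?D\<close> P
    by (intro divide_ennreal_le) simp_all
  also have "\<dots> = ennreal ((1 + inverse ?P * ?k) * ?D)"
    using P delta by (simp add: field_simps)
  finally show ?thesis
    using norm_bound by (simp add: well_conditioned_def mult.assoc)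
qed

end
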